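(* Let $\mathfrak H$ be the Hecke algebroid of a dihedral group (finite or infinite). Any trace $(\epsilon_X)_X$ on $\mathfrak H$ is determined by its component $\epsilon_\emptyset\colon\mathrm{End}(\emptyset)\to\mathbb Z[v^{\pm1}]$.
   Context: Let $W$ be generated by involutions $s,t$ with $st$ of order $m\in\{2,3,\dots\}\cup\{\infty\}$, with Hecke algebra $\mathbf H$ over $\mathbb Z[v^{\pm1}]$ (generators $T_s,T_t$, $T_i^2=(v^{-2}-1)T_i+v^{-2}$, braid relation of length $m$ if $m<\infty$) and Kazhdan–Lusztig basis $b_w=v^{\ell(w)}\sum_{x\le w}T_x$. For each finitary parabolic subset $J\subset\{s,t\}$ (i.e. $W_J$ finite) let $b_J=b_{w_J}$ ($w_J$ longest element of $W_J$) and $[J]=v^{-\ell(w_J)}\sum_{w\in W_J}v^{2\ell(w)}$. The Hecke algebroid has objects the finitary parabolic subsets, $\mathrm{Hom}(J,K)=\mathbf Hb_J\cap b_K\mathbf H$, composition $x\star y=xy/[J]$ for $x\in\mathrm{Hom}(J,K)$, $y\in\mathrm{Hom}(L,J)$. A trace on it is a family of $\mathbb Z[v^{\pm1}]$-linear maps $\epsilon_X\colon\mathrm{End}(X)\to\mathbb Z[v^{\pm1}]$ with $\epsilon_X(a\star b)=\epsilon_Y(b\star a)$ for all $a\in\mathrm{Hom}(Y,X)$, $b\in\mathrm{Hom}(X,Y)$. *)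

theory Defs
  imports Main "HOL-Library.Poly_Mapping" "HOL-Library.Extended_Nat" "HOL-Library.Sublist"
begin

text \<open>Laurent polynomials Z[v,v^-1] as the group ring of (int,+) over int.
  The exponent k corresponds to v^k.\<close>
type_synonym laurent = "int \<Rightarrow>\<^sub>0 int"

definition vp :: "int \<Rightarrow> laurent" where
  "vp k = Poly_Mapping.single k 1"

text \<open>The dihedral group W generated by s (= True) and t (= False) with st of order m
  (m :: enat, m = \<infinity> allowed).  Elements are represented by their reduced (alternating)
  words; the longest element (for m finite) is represented by the word starting with s.\<close>

definition alt :: "bool \<Rightarrow> nat \<Rightarrow> bool list" where
  "alt b n = map (\<lambda>i. if even i then b else \<not> b) [0..<n]"

definition Wd :: "enat \<Rightarrow> bool list set" where
  "Wd m = {alt b n | b n. enat n \<le> m \<and> (enat n = m \<longrightarrow> b)}"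

definition canon :: "enat \<Rightarrow> bool list \<Rightarrow> bool list" where
  "canon m w = (if enat (length w) = m then alt True (length w) else w)"

definition gmul :: "enat \<Rightarrow> bool \<Rightarrow> bool list \<Rightarrow> bool list" where
  "gmul m c w = canon m
     (if w \<noteq> [] \<and> hd w = c then tl w
      else if enat (length w) = m then tl (alt c (length w))
      else c # w)"

definition weval :: "enat \<Rightarrow> bool list \<Rightarrow> bool list" where
  "weval m u = foldr (gmul m) u []"

text \<open>Bruhat order via the subword property (w is a reduced word).\<close>
definition bruhat_le :: "enat \<Rightarrow> bool list \<Rightarrow> bool list \<Rightarrow> bool" where
  "bruhat_le m x w = (\<exists>u. subseq u w \<and> weval m u = x)"

text \<open>The Hecke algebra: the free Z[v^{+-1}]-module on W (elements supported on Wd m),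
  with basis T_w, multiplication defined through the left regular action
  T_c T_w = T_{cw} if l(cw) > l(w), and = (v^-2 - 1) T_w + v^-2 T_{cw} otherwise.\<close>
type_synonym hecke = "bool list \<Rightarrow>\<^sub>0 laurent"

definition hsmul :: "laurent \<Rightarrow> hecke \<Rightarrow> hecke" where
  "hsmul a x = Poly_Mapping.map ((*) a) x"

definition HT :: "bool list \<Rightarrow> hecke" where
  "HT w = Poly_Mapping.single w 1"

definition Hset :: "enat \<Rightarrow> hecke set" where
  "Hset m = {x. Poly_Mapping.keys x \<subseteq> Wd m}"

definition Tbasis :: "enat \<Rightarrow> bool \<Rightarrow> bool list \<Rightarrow> hecke" where
  "Tbasis m c w =
     (if length w < length (gmul m c w) then HT (gmul m c w)
      else hsmul (vp (-2) - 1) (HT w) + hsmul (vp (-2)) (HT (gmul m c w)))"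

definition Tgen :: "enat \<Rightarrow> bool \<Rightarrow> hecke \<Rightarrow> hecke" where
  "Tgen m c y = (\<Sum>w\<in>Poly_Mapping.keys y. hsmul (Poly_Mapping.lookup y w) (Tbasis m c w))"

definition Top :: "enat \<Rightarrow> bool list \<Rightarrow> hecke \<Rightarrow> hecke" where
  "Top m w = foldr (\<lambda>c f. Tgen m c \<circ> f) w id"

definition hmul :: "enat \<Rightarrow> hecke \<Rightarrow> hecke \<Rightarrow> hecke" where
  "hmul m x y = (\<Sum>w\<in>Poly_Mapping.keys x. hsmul (Poly_Mapping.lookup x w) (Top m w y))"

definition KL :: "enat \<Rightarrow> bool list \<Rightarrow> hecke" where
  "KL m w = hsmul (vp (int (length w))) (\<Sum>x\<in>{x\<in>Wd m. bruhat_le m x w}. HT x)"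

definition WJ :: "enat \<Rightarrow> bool set \<Rightarrow> bool list set" where
  "WJ m J = {w\<in>Wd m. set w \<subseteq> J}"

definition finitary :: "enat \<Rightarrow> bool set \<Rightarrow> bool" where
  "finitary m J = finite (WJ m J)"

definition wJ :: "enat \<Rightarrow> bool set \<Rightarrow> bool list" where
  "wJ m J = (THE w. w \<in> WJ m J \<and> (\<forall>x\<in>WJ m J. length x \<le> length w))"

definition bJ :: "enat \<Rightarrow> bool set \<Rightarrow> hecke" where
  "bJ m J = KL m (wJ m J)"

definition brk :: "enat \<Rightarrow> bool set \<Rightarrow> laurent" where
  "brk m J = vp (- int (length (wJ m J))) * (\<Sum>w\<in>WJ m J. vp (2 * int (length w)))"

definition hHom :: "enat \<Rightarrow> bool set \<Rightarrow> bool set \<Rightarrow> hecke set" where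
  "hHom m J K = {hmul m x (bJ m J) | x. x \<in> Hset m} \<inter> {hmul m (bJ m K) y | y. y \<in> Hset m}"

definition hEnd :: "enat \<Rightarrow> bool set \<Rightarrow> hecke set" where
  "hEnd m X = hHom m X X"

definition star :: "enat \<Rightarrow> bool set \<Rightarrow> hecke \<Rightarrow> hecke \<Rightarrow> hecke" where
  "star m J x y = (THE z. hsmul (brk m J) z = hmul m x y)"

definition is_trace :: "enat \<Rightarrow> (bool set \<Rightarrow> hecke \<Rightarrow> laurent) \<Rightarrow> bool" where
  "is_trace m eps =
     ((\<forall>X. finitary m X \<longrightarrow>
        (\<forall>a\<in>hEnd m X. \<forall>b\<in>hEnd m X. \<forall>c.
           eps X (hsmul c a + b) = c * eps X a + eps X b)) \<and>
      (\<forall>X Y. finitary m X \<longrightarrow> finitary m Y \<longrightarrow>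
        (\<forall>a\<in>hHom m Y X. \<forall>b\<in>hHom m X Y.
           eps X (star m Y a b) = eps Y (star m X b a))))"

end

theory Submission
  imports Defs
begin

text \<open>Let \<open>X\<close> be finitary and \<open>x \<in> End(X)\<close>.  Then also \<open>x \<in> Hom(\<emptyset>, X)\<close> and
  \<open>b\<^sub>X \<in> Hom(X, \<emptyset>)\<close>.  Since \<open>b\<^sub>X b\<^sub>X = [X] b\<^sub>X\<close> and \<open>x\<close> is a left and a right multiple of
  \<open>b\<^sub>X\<close>, we get \<open>x \<star> b\<^sub>X = [X] x\<close> in \<open>End(X)\<close> and \<open>b\<^sub>X \<star> x = x\<close> in \<open>End(\<emptyset>)\<close>, so the trace
  property reads \<open>[X] \<epsilon>\<^sub>X(x) = \<epsilon>\<^sub>\<emptyset>(x)\<close>; and \<open>[X] \<noteq> 0\<close> in the domain \<open>\<int>[v\<^sup>\<plusminus>\<^sup>1]\<close>.\<close>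


section \<open>Reduced words in the dihedral group\<close>

lemma alt_0[simp]: "alt b 0 = []"
  by (simp add: alt_def)

lemma alt_Suc: "alt b (Suc n) = b # alt (\<not> b) n"
  unfolding alt_def by (simp add: upt_conv_Cons map_Suc_upt[symmetric] del: upt_Suc)

lemma alt_1[simp]: "alt b (Suc 0) = [b]"
  by (simp add: alt_Suc)

lemma length_alt[simp]: "length (alt b n) = n"
  by (simp add: alt_def)

lemma alt_Nil_iff[simp]: "alt b n = [] \<longleftrightarrow> n = 0"
  by (simp add: alt_def)

lemma alt_snoc: "alt b (Suc n) = alt b n @ [if even n then b else \<not> b]"
  unfolding alt_def by simp

lemma alt_eq_iff: "alt b n = alt b' n' \<longleftrightarrow> n = n' \<and> (n = 0 \<or> b = b')"
proof
  assume h: "alt b n = alt b' n'"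
  hence "n = n'" by (metis length_alt)
  moreover have "n = 0 \<or> b = b'" using h \<open>n = n'\<close> by (cases n) (auto simp: alt_Suc)
  ultimately show "n = n' \<and> (n = 0 \<or> b = b')" by simp
qed auto

lemma hd_alt: "n > 0 \<Longrightarrow> hd (alt b n) = b"
  by (cases n) (auto simp: alt_Suc)

lemma tl_alt: "tl (alt b n) = alt (\<not> b) (n - 1)"
  by (cases n) (auto simp: alt_Suc)

lemma last_alt: "n > 0 \<Longrightarrow> last (alt b n) = (if even (n - 1) then b else \<not> b)"
  by (cases n) (auto simp: alt_snoc)

lemma butlast_alt: "butlast (alt b n) = alt b (n - 1)"
  by (cases n) (auto simp: alt_snoc)

lemma take_alt: "n \<le> N \<Longrightarrow> take n (alt b N) = alt b n"
  by (simp add: alt_def take_map min_def)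

lemma canon_Nil[simp]: "canon m [] = []"
  by (simp add: canon_def)

lemma length_canon[simp]: "length (canon m w) = length w"
  by (simp add: canon_def)

lemma canon_single: "2 \<le> m \<Longrightarrow> canon m [c] = [c]"
  by (cases m) (auto simp: canon_def)

lemma canon_alt: "canon m (alt b k) = (if enat k = m then alt True k else alt b k)"
  by (simp add: canon_def)

lemma gmul_alt: "gmul m c (alt b n) = canon m
   (if 0 < n \<and> b = c then alt (\<not> b) (n - 1) else if enat n = m then alt (\<not> c) (n - 1)
    else alt c (n + 1))"
proof -
  have "c # alt b n = alt c (n+1)" if "\<not> (0 < n \<and> b = c)"
    using that by (cases n) (auto simp: alt_Suc)
  show ?thesis
  proof (cases "0 < n \<and> b = c")
    case True thus ?thesis unfolding gmul_def using hd_alt[of n b] tl_alt[of b n] by auto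
  next
    case False
    hence ne: "alt b n \<noteq> [] \<Longrightarrow> hd (alt b n) \<noteq> c" using hd_alt[of n b] by auto
    show ?thesis unfolding gmul_def using False ne tl_alt[of c n] \<open>\<not> (0 < n \<and> b = c) \<Longrightarrow> _\<close> by auto
  qed
qed

lemma gmul_alt_Suc:
  "enat (Suc k) \<le> m \<Longrightarrow> (enat (Suc k) = m \<longrightarrow> b) \<Longrightarrow> gmul m b (alt (\<not> b) k) = alt b (Suc k)"
  by (cases m) (auto simp: gmul_alt canon_alt alt_eq_iff)

definition gmulR :: "enat \<Rightarrow> bool \<Rightarrow> bool list \<Rightarrow> bool list" where
  "gmulR m d w = canon m
     (if w \<noteq> [] \<and> last w = d then butlast w
      else if enat (length w) = m then butlast (alt (\<not> hd w) (length w))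
      else w @ [d])"

lemma gmulR_alt: "gmulR m d (alt b n) = canon m
   (if 0 < n \<and> (if even (n - 1) then b else \<not> b) = d then alt b (n - 1)
    else if enat n = m then alt (\<not> b) (n - 1)
    else if n = 0 then alt d 1 else alt b (n + 1))"
proof (cases "0 < n \<and> (if even (n - 1) then b else \<not> b) = d")
  case True thus ?thesis unfolding gmulR_def using last_alt[of n b] butlast_alt[of b n] by auto
next
  case False
  hence ne: "alt b n \<noteq> [] \<Longrightarrow> last (alt b n) \<noteq> d" using last_alt[of n b] by auto
  have e: "n \<noteq> 0 \<Longrightarrow> alt b n @ [d] = alt b (n+1)" using False
    by (cases n) (auto simp: alt_snoc[of b "Suc _"])
  have h: "n \<noteq> 0 \<Longrightarrow> hd (alt b n) = b" using hd_alt by auto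
  show ?thesis unfolding gmulR_def using False ne e h butlast_alt[of "\<not> b" n]
    by (auto simp: alt_Suc)
qed

lemma alt_length_cases:
  assumes "enat n \<le> m" "enat n = m \<longrightarrow> b" "2 \<le> m"
  obtains "n = 0" "m = enat 2"
    | "n = 0" "enat 2 < m"
    | "0 < n" "m = enat n" "b"
    | "0 < n" "m = enat (n + 1)"
    | "0 < n" "m = enat (n + 2)"
    | "0 < n" "enat (n + 2) < m"
proof (cases m)
  case (enat M)
  with assms have "n \<le> M" "2 \<le> M" "n = M \<longrightarrow> b" by (auto simp: numeral_eq_enat)
  with enat that show thesis
    by (cases "n = 0"; cases "M = n"; cases "M = n + 1"; cases "M = n + 2") auto
qed (use that in \<open>auto simp: numeral_eq_enat\<close>)

lemma Wd_iff: "w \<in> Wd m \<longleftrightarrow> (\<exists>b n. w = alt b n \<and> enat n \<le> m \<and> (enat n = m \<longrightarrow> b))"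
  unfolding Wd_def by auto

lemma WdE:
  assumes "w \<in> Wd m"
  obtains b n where "w = alt b n" "enat n \<le> m" "enat n = m \<longrightarrow> b"
  using assms unfolding Wd_iff by blast

lemma canon_alt_in_Wd: "enat k \<le> m \<Longrightarrow> canon m (alt b k) \<in> Wd m"
  by (auto simp: canon_alt Wd_def)

context
  fixes m :: enat
  assumes m2: "2 \<le> m"
begin

lemma gmul_in_Wd: "w \<in> Wd m \<Longrightarrow> gmul m c w \<in> Wd m"
  by (elim WdE) (use m2 in \<open>cases m; auto intro!: canon_alt_in_Wd simp: gmul_alt simp del: alt_0 alt_1\<close>)

lemma gmulR_in_Wd: "w \<in> Wd m \<Longrightarrow> gmulR m c w \<in> Wd m"
  by (elim WdE) (use m2 in \<open>cases m; auto intro!: canon_alt_in_Wd simp: gmulR_alt simp del: alt_0 alt_1\<close>)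

lemma gmul_gmul: "w \<in> Wd m \<Longrightarrow> gmul m c (gmul m c w) = w"
proof (elim WdE)
  fix b n assume w: "w = alt b n" and n: "enat n \<le> m" "enat n = m \<longrightarrow> b"
  from n m2 show ?thesis unfolding w
    by (cases rule: alt_length_cases; cases b; cases c; cases "even n")
       (auto simp: gmul_alt canon_alt alt_eq_iff simp del: alt_0 alt_1)
qed

lemma gmulR_gmulR: "w \<in> Wd m \<Longrightarrow> gmulR m d (gmulR m d w) = w"
proof (elim WdE)
  fix b n assume w: "w = alt b n" and n: "enat n \<le> m" "enat n = m \<longrightarrow> b"
  from n m2 show ?thesis unfolding w
    by (cases rule: alt_length_cases; cases b; cases d; cases "even n")
       (auto simp: gmulR_alt canon_alt alt_eq_iff simp del: alt_0 alt_1)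
qed

lemma gmul_gmulR_commute: "w \<in> Wd m \<Longrightarrow> gmul m c (gmulR m d w) = gmulR m d (gmul m c w)"
proof (elim WdE)
  fix b n assume w: "w = alt b n" and n: "enat n \<le> m" "enat n = m \<longrightarrow> b"
  from n m2 show ?thesis unfolding w
    by (cases rule: alt_length_cases; cases b; cases c; cases d; cases "even n")
       (auto simp: gmul_alt gmulR_alt canon_alt alt_eq_iff simp del: alt_0 alt_1)
qed

lemma length_gmul:
  "w \<in> Wd m \<Longrightarrow> length (gmul m c w) = length w + 1 \<or> length (gmul m c w) + 1 = length w"
proof (elim WdE)
  fix b n assume w: "w = alt b n" and n: "enat n \<le> m" "enat n = m \<longrightarrow> b"
  from n m2 show ?thesis unfolding w
    by (cases rule: alt_length_cases; cases b; cases c; cases "even n")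
       (auto simp: gmul_alt canon_alt simp del: alt_0 alt_1)
qed

lemma length_gmulR:
  "w \<in> Wd m \<Longrightarrow> length (gmulR m d w) = length w + 1 \<or> length (gmulR m d w) + 1 = length w"
proof (elim WdE)
  fix b n assume w: "w = alt b n" and n: "enat n \<le> m" "enat n = m \<longrightarrow> b"
  from n m2 show ?thesis unfolding w
    by (cases rule: alt_length_cases; cases b; cases d; cases "even n")
       (auto simp: gmulR_alt canon_alt simp del: alt_0 alt_1)
qed

lemma gmul_eq_gmulR:
  assumes "w \<in> Wd m" "length (gmul m c (gmulR m d w)) = length w"
    "(length w < length (gmul m c w)) = (length w < length (gmulR m d w))"
  shows "gmul m c w = gmulR m d w"
  using assms(1)
proof (elim WdE)
  fix b n assume w: "w = alt b n" and n: "enat n \<le> m" "enat n = m \<longrightarrow> b"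
  have "length (gmul m c (gmulR m d (alt b n))) \<noteq> n
    \<or> (n < length (gmul m c (alt b n))) \<noteq> (n < length (gmulR m d (alt b n)))
    \<or> gmul m c (alt b n) = gmulR m d (alt b n)"
    using n m2
    by (cases rule: alt_length_cases; cases b; cases c; cases d; cases "even n")
       (auto simp: gmul_alt gmulR_alt canon_alt alt_eq_iff if_distrib[of "canon _"]
         if_distrib[of length] simp del: alt_0 alt_1)
  with assms(2,3) show ?thesis unfolding w by simp
qed

end


section \<open>The Hecke algebra\<close>

lemma lookup_hsmul[simp]: "Poly_Mapping.lookup (hsmul a x) w = a * Poly_Mapping.lookup x w"
  by (simp add: hsmul_def Poly_Mapping.map.rep_eq when_def)

lemma lookup_HT: "Poly_Mapping.lookup (HT w) u = (if w = u then 1 else 0)"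
  by (simp add: HT_def lookup_single when_def)

lemma hsmul_add_right: "hsmul a (x + y) = hsmul a x + hsmul a y"
  by (rule poly_mapping_eqI) (simp add: lookup_add algebra_simps)

lemma hsmul_add_left: "hsmul (a + b) x = hsmul a x + hsmul b x"
  by (rule poly_mapping_eqI) (simp add: lookup_add algebra_simps)

lemma hsmul_zero_left[simp]: "hsmul 0 x = 0"
  by (rule poly_mapping_eqI) simp

lemma hsmul_zero_right[simp]: "hsmul a 0 = 0"
  by (rule poly_mapping_eqI) simp

lemma hsmul_one[simp]: "hsmul 1 x = x"
  by (rule poly_mapping_eqI) simp

lemma hsmul_hsmul: "hsmul a (hsmul b x) = hsmul (a * b) x"
  by (rule poly_mapping_eqI) (simp add: algebra_simps)

lemma hsmul_sum: "hsmul a (sum f S) = (\<Sum>i\<in>S. hsmul a (f i))"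
  by (induction S rule: infinite_finite_induct) (auto simp: hsmul_add_right)

lemma sum_hsmul: "(\<Sum>i\<in>S. hsmul (f i) x) = hsmul (sum f S) x"
  by (induction S rule: infinite_finite_induct) (auto simp: hsmul_add_left)

lemma hsmul_diff_one: "x + hsmul (a - 1) x = hsmul a x"
  by (rule poly_mapping_eqI) (simp add: lookup_add algebra_simps)

lemma hsmul_left_cancel: "a \<noteq> 0 \<Longrightarrow> hsmul a x = hsmul a y \<longleftrightarrow> x = y"
  by (metis lookup_hsmul mult_left_cancel poly_mapping_eqI)

lemma keys_hsmul: "Poly_Mapping.keys (hsmul a x) \<subseteq> Poly_Mapping.keys x"
  by (auto simp: in_keys_iff)

definition lin_ext :: "(bool list \<Rightarrow> hecke) \<Rightarrow> hecke \<Rightarrow> hecke" where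
  "lin_ext f y = (\<Sum>w\<in>Poly_Mapping.keys y. hsmul (Poly_Mapping.lookup y w) (f w))"

lemma lin_ext_superset:
  assumes "finite S" "Poly_Mapping.keys y \<subseteq> S"
  shows "lin_ext f y = (\<Sum>w\<in>S. hsmul (Poly_Mapping.lookup y w) (f w))"
  unfolding lin_ext_def
  by (rule sum.mono_neutral_left) (use assms in \<open>auto simp: in_keys_iff\<close>)

lemma lin_ext_add: "lin_ext f (x + y) = lin_ext f x + lin_ext f y"
proof -
  let ?S = "Poly_Mapping.keys x \<union> Poly_Mapping.keys y"
  have "lin_ext f (x + y) = (\<Sum>w\<in>?S. hsmul (Poly_Mapping.lookup (x + y) w) (f w))"
    by (rule lin_ext_superset) (auto dest: subsetD[OF keys_add])
  also have "\<dots> = (\<Sum>w\<in>?S. hsmul (Poly_Mapping.lookup x w) (f w))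
      + (\<Sum>w\<in>?S. hsmul (Poly_Mapping.lookup y w) (f w))"
    by (simp add: lookup_add hsmul_add_left sum.distrib)
  also have "\<dots> = lin_ext f x + lin_ext f y"
    using lin_ext_superset[of ?S x f] lin_ext_superset[of ?S y f] by simp
  finally show ?thesis .
qed

lemma lin_ext_hsmul: "lin_ext f (hsmul a y) = hsmul a (lin_ext f y)"
proof -
  have "lin_ext f (hsmul a y)
      = (\<Sum>w\<in>Poly_Mapping.keys y. hsmul (Poly_Mapping.lookup (hsmul a y) w) (f w))"
    by (rule lin_ext_superset) (auto simp: keys_hsmul)
  thus ?thesis by (simp add: lin_ext_def hsmul_sum hsmul_hsmul)
qed

lemma lin_ext_HT[simp]: "lin_ext f (HT w) = f w"
  by (simp add: lin_ext_def HT_def)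

lemma lin_ext_cong: "(\<And>w. w \<in> Poly_Mapping.keys y \<Longrightarrow> f w = g w) \<Longrightarrow> lin_ext f y = lin_ext g y"
  by (simp add: lin_ext_def)

lemma lin_ext_HT_id: "lin_ext HT y = y"
proof (rule poly_mapping_eqI)
  fix k
  have "Poly_Mapping.lookup (lin_ext HT y) k
      = (\<Sum>w\<in>Poly_Mapping.keys y. Poly_Mapping.lookup y w * (if w = k then 1 else 0))"
    by (simp add: lin_ext_def lookup_sum lookup_HT)
  also have "\<dots> = Poly_Mapping.lookup y k"
    by (simp add: if_distrib[of "(*) _"] sum.delta in_keys_iff cong: if_cong)
  finally show "Poly_Mapping.lookup (lin_ext HT y) k = Poly_Mapping.lookup y k" .
qed

definition hlinear :: "(hecke \<Rightarrow> hecke) \<Rightarrow> bool" where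
  "hlinear F \<longleftrightarrow> (\<forall>x y. F (x + y) = F x + F y) \<and> (\<forall>a x. F (hsmul a x) = hsmul a (F x))"

lemma hlinear_lin_ext: "hlinear (lin_ext f)"
  by (simp add: hlinear_def lin_ext_add lin_ext_hsmul)

lemma hlinear_zero: "hlinear F \<Longrightarrow> F 0 = 0"
  unfolding hlinear_def by (metis hsmul_zero_left)

lemma hlinear_sum: "hlinear F \<Longrightarrow> F (sum g S) = (\<Sum>i\<in>S. F (g i))"
  by (induction S rule: infinite_finite_induct) (auto simp: hlinear_zero hlinear_def)

lemma hlinear_comp: "hlinear F \<Longrightarrow> hlinear G \<Longrightarrow> hlinear (F \<circ> G)"
  by (simp add: hlinear_def)

lemma hlinear_eq_lin_ext: "hlinear F \<Longrightarrow> F y = lin_ext (\<lambda>w. F (HT w)) y"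
proof -
  assume F: "hlinear F"
  have "F y = F (lin_ext HT y)" by (simp add: lin_ext_HT_id)
  also have "\<dots> = lin_ext (\<lambda>w. F (HT w)) y"
    unfolding lin_ext_def using F by (simp add: hlinear_sum hlinear_def)
  finally show ?thesis .
qed

lemma hlinear_eqI:
  assumes "hlinear F" "hlinear G" "y \<in> Hset m" "\<And>w. w \<in> Wd m \<Longrightarrow> F (HT w) = G (HT w)"
  shows "F y = G y"
  using assms(3,4)
  by (subst hlinear_eq_lin_ext[OF assms(1)], subst hlinear_eq_lin_ext[OF assms(2)])
     (rule lin_ext_cong, auto simp: Hset_def)

lemma Hset_lin_ext:
  assumes "\<And>w. w \<in> Wd m \<Longrightarrow> f w \<in> Hset m" "y \<in> Hset m"
  shows "lin_ext f y \<in> Hset m"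
proof -
  have "Poly_Mapping.keys (lin_ext f y)
      \<subseteq> (\<Union>w\<in>Poly_Mapping.keys y. Poly_Mapping.keys (hsmul (Poly_Mapping.lookup y w) (f w)))"
    unfolding lin_ext_def by (rule keys_sum)
  also have "\<dots> \<subseteq> (\<Union>w\<in>Poly_Mapping.keys y. Poly_Mapping.keys (f w))"
    using keys_hsmul by blast
  also have "\<dots> \<subseteq> Wd m" using assms by (auto simp: Hset_def)
  finally show ?thesis by (simp add: Hset_def)
qed

lemma Hset_HT: "w \<in> Wd m \<Longrightarrow> HT w \<in> Hset m"
  by (simp add: Hset_def HT_def)

lemma Hset_add: "x \<in> Hset m \<Longrightarrow> y \<in> Hset m \<Longrightarrow> x + y \<in> Hset m"
  using keys_add by (fastforce simp: Hset_def)

lemma Hset_hsmul: "x \<in> Hset m \<Longrightarrow> hsmul a x \<in> Hset m"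
  using keys_hsmul by (fastforce simp: Hset_def)

lemma Hset_zero: "0 \<in> Hset m"
  by (simp add: Hset_def)

lemma Hset_sum: "(\<And>i. i \<in> S \<Longrightarrow> f i \<in> Hset m) \<Longrightarrow> sum f S \<in> Hset m"
  by (induction S rule: infinite_finite_induct) (simp_all add: Hset_add Hset_zero)

lemma Hset_KL: "KL m w \<in> Hset m"
  unfolding KL_def by (intro Hset_hsmul Hset_sum Hset_HT) simp


lemma Tgen_eq_lin_ext: "Tgen m c = lin_ext (Tbasis m c)"
  by (simp add: fun_eq_iff Tgen_def lin_ext_def)

lemma hmul_eq_lin_ext: "hmul m x y = lin_ext (\<lambda>w. Top m w y) x"
  by (simp add: hmul_def lin_ext_def)

lemma Top_Nil[simp]: "Top m [] = id"
  by (simp add: Top_def)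

lemma Top_Cons[simp]: "Top m (c # w) = Tgen m c \<circ> Top m w"
  by (simp add: Top_def)

lemma Tgen_HT[simp]: "Tgen m c (HT w) = Tbasis m c w"
  by (simp add: Tgen_eq_lin_ext)

lemma hlinear_Tgen: "hlinear (Tgen m c)"
  by (simp add: Tgen_eq_lin_ext hlinear_lin_ext)

lemma hlinear_Top: "hlinear (Top m w)"
proof (induction w)
  case (Cons c w)
  show ?case unfolding Top_Cons by (rule hlinear_comp[OF hlinear_Tgen Cons.IH])
qed (simp add: hlinear_def)

lemma hlinear_hmul: "hlinear (hmul m x)"
  using hlinear_Top[of m]
  unfolding hlinear_def hmul_def
  by (simp add: sum.distrib hsmul_add_right hsmul_sum hsmul_hsmul mult.commute)

lemma hmul_hsmul_left: "hmul m (hsmul a x) y = hsmul a (hmul m x y)"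
  by (simp add: hmul_eq_lin_ext lin_ext_hsmul)

lemma hmul_hsmul_right: "hmul m x (hsmul a y) = hsmul a (hmul m x y)"
  using hlinear_hmul unfolding hlinear_def by blast

lemma hmul_Nil_left: "hmul m (HT []) y = y"
  by (simp add: hmul_eq_lin_ext)

text \<open>The product is defined through the left action of the generators only.  Associativity
  comes from a right action by generators commuting with the left one: then right multiplication
  by a basis element \<open>T\<^sub>u\<close> is the right action of \<open>u\<close>, and hence commutes with every left
  multiplication.\<close>

definition TbasisR :: "enat \<Rightarrow> bool \<Rightarrow> bool list \<Rightarrow> hecke" where
  "TbasisR m d w =
     (if length w < length (gmulR m d w) then HT (gmulR m d w)
      else hsmul (vp (-2) - 1) (HT w) + hsmul (vp (-2)) (HT (gmulR m d w)))"

definition TgenR :: "enat \<Rightarrow> bool \<Rightarrow> hecke \<Rightarrow> hecke" where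
  "TgenR m d = lin_ext (TbasisR m d)"

definition TopR :: "enat \<Rightarrow> bool list \<Rightarrow> hecke \<Rightarrow> hecke" where
  "TopR m u y = fold (TgenR m) u y"

lemma TopR_Nil[simp]: "TopR m [] y = y"
  by (simp add: TopR_def)

lemma TopR_snoc[simp]: "TopR m (u @ [d]) y = TgenR m d (TopR m u y)"
  by (simp add: TopR_def)

lemma TgenR_HT[simp]: "TgenR m c (HT w) = TbasisR m c w"
  by (simp add: TgenR_def)

lemma hlinear_TgenR: "hlinear (TgenR m d)"
  by (simp add: TgenR_def hlinear_lin_ext)

lemma Nil_in_Wd: "[] \<in> Wd m"
  unfolding Wd_iff by (rule exI[of _ True], rule exI[of _ 0]) (simp add: zero_enat_def[symmetric])

context
  fixes m :: enat
  assumes m2: "2 \<le> m"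
begin

lemma Hset_Tgen: "y \<in> Hset m \<Longrightarrow> Tgen m c y \<in> Hset m"
  unfolding Tgen_eq_lin_ext
  by (rule Hset_lin_ext)
     (auto simp: Tbasis_def intro!: Hset_add Hset_hsmul Hset_HT gmul_in_Wd[OF m2])

lemma Hset_TgenR: "y \<in> Hset m \<Longrightarrow> TgenR m c y \<in> Hset m"
  unfolding TgenR_def
  by (rule Hset_lin_ext)
     (auto simp: TbasisR_def intro!: Hset_add Hset_hsmul Hset_HT gmulR_in_Wd[OF m2])

lemma Hset_Top: "y \<in> Hset m \<Longrightarrow> Top m w y \<in> Hset m"
  by (induction w) (auto simp: Hset_Tgen)

lemma Hset_TopR: "y \<in> Hset m \<Longrightarrow> TopR m u y \<in> Hset m"
  by (induction u rule: rev_induct) (auto simp: Hset_TgenR)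

lemma Hset_hmul: "y \<in> Hset m \<Longrightarrow> hmul m x y \<in> Hset m"
  unfolding hmul_def by (intro Hset_sum Hset_hsmul Hset_Top)

lemma Tgen_TbasisR_commute:
  assumes u: "u \<in> Wd m"
  shows "Tgen m c (TbasisR m d u) = TgenR m d (Tbasis m c u)"
proof -
  define cu where "cu = gmul m c u"
  define ud where "ud = gmulR m d u"
  define z where "z = gmul m c ud"
  have cuW: "cu \<in> Wd m" "ud \<in> Wd m"
    using u by (simp_all add: cu_def ud_def gmul_in_Wd[OF m2] gmulR_in_Wd[OF m2])
  have inv: "gmul m c cu = u" "gmulR m d ud = u"
    using u by (simp_all add: cu_def ud_def gmul_gmul[OF m2] gmulR_gmulR[OF m2])
  have comm: "gmulR m d cu = z"
    using u by (simp add: cu_def ud_def z_def gmul_gmulR_commute[OF m2])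
  have l1: "length cu = length u + 1 \<or> length cu + 1 = length u"
    using length_gmul[OF m2 u] cu_def by simp
  have l2: "length ud = length u + 1 \<or> length ud + 1 = length u"
    using length_gmulR[OF m2 u] ud_def by simp
  have l3: "length z = length ud + 1 \<or> length z + 1 = length ud"
    using length_gmul[OF m2 cuW(2)] z_def by simp
  have l4: "length z = length cu + 1 \<or> length z + 1 = length cu"
    using length_gmulR[OF m2 cuW(1), of d] comm by simp
  have exch: "length z = length u \<Longrightarrow> (length u < length cu) = (length u < length ud) \<Longrightarrow> cu = ud"
    using gmul_eq_gmulR[OF m2 u] z_def cu_def ud_def by simp
  have zu: "cu = ud \<Longrightarrow> z = u"
    using inv z_def by simp
  txt \<open>The only delicate case is \<open>\<ell>(cud) = \<ell>(u)\<close> with \<open>cu\<close>, \<open>ud\<close> both longer or both shorter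
    than \<open>u\<close>; there \<open>exch\<close> gives \<open>cu = ud\<close>.\<close>
  show ?thesis
    using l1 l2 l3 l4 exch zu
    by (auto simp: Tbasis_def TbasisR_def inv comm cu_def[symmetric] ud_def[symmetric]
        z_def[symmetric] hlinear_Tgen[unfolded hlinear_def] hlinear_TgenR[unfolded hlinear_def]
        lookup_add lookup_HT algebra_simps intro!: poly_mapping_eqI)
qed

lemma Tgen_TgenR_commute: "y \<in> Hset m \<Longrightarrow> Tgen m c (TgenR m d y) = TgenR m d (Tgen m c y)"
  using hlinear_eqI[of "Tgen m c \<circ> TgenR m d" "TgenR m d \<circ> Tgen m c" y m]
  by (simp add: hlinear_comp hlinear_Tgen hlinear_TgenR Tgen_TbasisR_commute)

lemma hmul_TopR: "y \<in> Hset m \<Longrightarrow> hmul m x (TopR m u y) = TopR m u (hmul m x y)"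
proof (induction u rule: rev_induct)
  case (snoc d u)
  have "Top m w (TgenR m d y) = TgenR m d (Top m w y)" if "y \<in> Hset m" for w y
    using that by (induction w) (simp_all add: Tgen_TgenR_commute Hset_Top)
  hence "hmul m x (TgenR m d y) = TgenR m d (hmul m x y)" if "y \<in> Hset m" for y
    using that unfolding hmul_def by (simp add: hlinear_sum[OF hlinear_TgenR] hlinear_TgenR[unfolded hlinear_def])
  with snoc show ?case by (simp add: Hset_TopR)
qed simp

lemma Top_alt_Nil:
  "enat n \<le> m \<Longrightarrow> (enat n = m \<longrightarrow> b) \<Longrightarrow> Top m (alt b n) (HT []) = HT (alt b n)"
proof (induction n arbitrary: b)
  case (Suc k)
  have "enat k \<le> m" "enat k \<noteq> m"
    using Suc.prems by (cases m; simp)+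
  with Suc show ?case by (simp add: alt_Suc[of b k] Tbasis_def gmul_alt_Suc)
qed simp

lemma TopR_alt_Nil:
  "enat n \<le> m \<Longrightarrow> (enat n = m \<longrightarrow> b) \<Longrightarrow> TopR m (alt b n) (HT []) = HT (alt b n)"
proof (induction n)
  case (Suc k)
  have k: "enat k \<le> m" "enat k \<noteq> m"
    using Suc.prems by (cases m; simp)+
  have "gmulR m (if even k then b else \<not> b) (alt b k) = alt b (Suc k)"
    using Suc.prems k m2
    by (cases k) (auto simp: gmulR_alt canon_alt alt_eq_iff simp del: alt_0 alt_1)
  with Suc.IH k show ?case by (simp add: alt_snoc[of b k] TbasisR_def)
qed simp

lemma hmul_Nil_right: "x \<in> Hset m \<Longrightarrow> hmul m x (HT []) = x"
proof -
  assume x: "x \<in> Hset m"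
  have "Top m w (HT []) = HT w" if "w \<in> Wd m" for w
    using that by (elim WdE) (simp add: Top_alt_Nil)
  with x have "lin_ext (\<lambda>w. Top m w (HT [])) x = lin_ext HT x"
    by (intro lin_ext_cong) (auto simp: Hset_def)
  thus ?thesis by (simp add: hmul_eq_lin_ext lin_ext_HT_id)
qed

lemma hmul_HT_right: "x \<in> Hset m \<Longrightarrow> u \<in> Wd m \<Longrightarrow> hmul m x (HT u) = TopR m u x"
  using hmul_TopR[of "HT []" x u]
  by (auto elim!: WdE simp: TopR_alt_Nil Hset_HT Nil_in_Wd hmul_Nil_right)

lemma hmul_assoc:
  assumes "x \<in> Hset m" "y \<in> Hset m" "z \<in> Hset m"
  shows "hmul m (hmul m x y) z = hmul m x (hmul m y z)"
  using hlinear_eqI[of "hmul m (hmul m x y)" "hmul m x \<circ> hmul m y" z m] assms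
  by (simp add: hlinear_comp hlinear_hmul hmul_HT_right Hset_hmul hmul_TopR)

end


section \<open>The elements \<open>b\<^sub>J\<close>\<close>

lemma vp_mult: "vp a * vp b = vp (a + b)"
  by (simp add: vp_def mult_single)

lemma vp_0[simp]: "vp 0 = 1"
  by (simp add: vp_def)

lemma vp_nonzero: "vp k \<noteq> 0"
  by (simp add: vp_def)

lemma subseq_singleton_right_iff: "subseq u [c] \<longleftrightarrow> u = [] \<or> u = [c]"
  by (cases u) auto

lemma Tgen_hsmul: "Tgen m c (hsmul a x) = hsmul a (Tgen m c x)"
  using hlinear_Tgen unfolding hlinear_def by blast

context
  fixes m :: enat
  assumes m2: "2 \<le> m"
begin

lemma Tgen_sum_HT:
  assumes A: "finite A" "A \<subseteq> Wd m" "\<And>w. w \<in> A \<Longrightarrow> gmul m c w \<in> A"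
  shows "Tgen m c (\<Sum>w\<in>A. HT w) = hsmul (vp (-2)) (\<Sum>w\<in>A. HT w)"
proof -
  txt \<open>On each span of \<open>T\<^sub>w, T\<^sub>c\<^sub>w\<close> with \<open>w < cw\<close>, \<open>T\<^sub>c\<close> has the eigenvector \<open>T\<^sub>w + T\<^sub>c\<^sub>w\<close>
    with eigenvalue \<open>v\<^sup>-\<^sup>2\<close>.\<close>
  define U where "U = {w\<in>A. length w < length (gmul m c w)}"
  define D where "D = A - U"
  have AUD: "A = U \<union> D" "U \<inter> D = {}" "finite U" "finite D" using A by (auto simp: U_def D_def)
  have inv: "\<And>w. w \<in> A \<Longrightarrow> gmul m c (gmul m c w) = w" using A(2) gmul_gmul[OF m2] by blast
  have len: "\<And>w. w \<in> A \<Longrightarrow> length (gmul m c w) = length w + 1 \<or> length (gmul m c w) + 1 = length w"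
    using A(2) length_gmul[OF m2] by blast
  have UD: "gmul m c w \<in> D" if "w \<in> U" for w
  proof -
    have "w \<in> A" "length w < length (gmul m c w)" using that by (auto simp: U_def)
    thus ?thesis using inv[of w] A(3)[of w] by (auto simp: U_def D_def)
  qed
  have DU: "gmul m c w \<in> U" if "w \<in> D" for w
  proof -
    have "w \<in> A" "\<not> length w < length (gmul m c w)" using that by (auto simp: U_def D_def)
    thus ?thesis using inv[of w] A(3)[of w] len[of w] by (auto simp: U_def D_def)
  qed
  have invU: "gmul m c (gmul m c w) = w" if "w \<in> U \<or> w \<in> D" for w
    using that inv by (auto simp: U_def D_def)
  have sU: "(\<Sum>w\<in>U. HT (gmul m c w)) = (\<Sum>w\<in>D. HT w)"
    by (rule sum.reindex_bij_witness[where i="gmul m c" and j="gmul m c"])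
       (simp_all add: UD DU invU)
  have sD: "(\<Sum>w\<in>D. HT (gmul m c w)) = (\<Sum>w\<in>U. HT w)"
    by (rule sum.reindex_bij_witness[where i="gmul m c" and j="gmul m c"])
       (simp_all add: UD DU invU)
  have "Tgen m c (\<Sum>w\<in>A. HT w) = (\<Sum>w\<in>A. Tbasis m c w)"
    by (simp add: hlinear_sum[OF hlinear_Tgen])
  also have "\<dots> = (\<Sum>w\<in>U. Tbasis m c w) + (\<Sum>w\<in>D. Tbasis m c w)"
    using AUD by (simp add: sum.union_disjoint)
  also have "(\<Sum>w\<in>U. Tbasis m c w) = (\<Sum>w\<in>U. HT (gmul m c w))"
    by (rule sum.cong) (auto simp: Tbasis_def U_def)
  also have "(\<Sum>w\<in>D. Tbasis m c w) = hsmul (vp (-2) - 1) (\<Sum>w\<in>D. HT w) + hsmul (vp (-2)) (\<Sum>w\<in>D. HT (gmul m c w))"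
    by (subst sum.cong[OF refl, of _ _ "\<lambda>w. hsmul (vp (-2) - 1) (HT w) + hsmul (vp (-2)) (HT (gmul m c w))"])
       (auto simp: Tbasis_def U_def D_def sum.distrib hsmul_sum)
  finally have "Tgen m c (\<Sum>w\<in>A. HT w) = hsmul (vp (-2)) (\<Sum>w\<in>D. HT w) + hsmul (vp (-2)) (\<Sum>w\<in>U. HT w)"
    unfolding sU sD by (simp add: add.assoc[symmetric] hsmul_diff_one)
  also have "\<dots> = hsmul (vp (-2)) (\<Sum>w\<in>A. HT w)"
    using AUD by (simp add: sum.union_disjoint hsmul_add_right add.commute)
  finally show ?thesis .
qed

lemma Top_sum_HT:
  assumes "finite A" "A \<subseteq> Wd m" "\<And>c w. c \<in> X \<Longrightarrow> w \<in> A \<Longrightarrow> gmul m c w \<in> A" "set u \<subseteq> X"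
  shows "Top m u (\<Sum>w\<in>A. HT w) = hsmul (vp (- 2 * int (length u))) (\<Sum>w\<in>A. HT w)"
  using assms(4)
proof (induction u)
  case (Cons c u)
  hence "Top m (c # u) (\<Sum>w\<in>A. HT w) = hsmul (vp (- 2 * int (length u))) (hsmul (vp (-2)) (\<Sum>w\<in>A. HT w))"
    using Tgen_sum_HT[OF assms(1,2)] assms(3) by (simp add: Tgen_hsmul)
  thus ?case by (simp add: hsmul_hsmul vp_mult algebra_simps)
qed simp

text \<open>The quasi-idempotence \<open>b\<^sub>J b\<^sub>J = [J] b\<^sub>J\<close>, for \<open>b\<^sub>J\<close> written as \<open>v\<^sup>l\<close> times the sum of
  the \<open>T\<^sub>w\<close>, \<open>w \<in> A\<close>: each \<open>T\<^sub>w\<close> acts on that sum by \<open>v\<^sup>-\<^sup>2\<^sup>\<ell>\<^sup>(\<^sup>w\<^sup>)\<close>, and the complement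
  involution \<open>\<phi>\<close> turns the resulting \<open>v\<^sup>l \<Sum> v\<^sup>-\<^sup>2\<^sup>\<ell>\<^sup>(\<^sup>w\<^sup>)\<close> into \<open>v\<^sup>-\<^sup>l \<Sum> v\<^sup>2\<^sup>\<ell>\<^sup>(\<^sup>w\<^sup>)\<close>.\<close>
lemma hmul_sum_HT_self:
  assumes A: "finite A" "A \<subseteq> Wd m" "\<And>c w. c \<in> X \<Longrightarrow> w \<in> A \<Longrightarrow> gmul m c w \<in> A"
      "\<And>w. w \<in> A \<Longrightarrow> set w \<subseteq> X"
    and \<phi>: "\<And>w. w \<in> A \<Longrightarrow> \<phi> w \<in> A" "\<And>w. w \<in> A \<Longrightarrow> \<phi> (\<phi> w) = w"
      "\<And>w. w \<in> A \<Longrightarrow> length (\<phi> w) + length w = l"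
    and B: "B = hsmul (vp (int l)) (\<Sum>w\<in>A. HT w)"
  shows "hmul m B B = hsmul (vp (- int l) * (\<Sum>w\<in>A. vp (2 * int (length w)))) B"
proof -
  have "hmul m B B = hsmul (vp (int l)) (\<Sum>w\<in>A. Top m w B)"
    by (simp add: B hmul_hsmul_left hmul_eq_lin_ext lin_ext_hsmul hlinear_sum[OF hlinear_lin_ext])
  also have "\<dots> = hsmul (vp (int l)) (\<Sum>w\<in>A. hsmul (vp (- 2 * int (length w))) B)"
    using Top_sum_HT[OF A(1-3)] A(4) hlinear_Top[unfolded hlinear_def]
    by (simp add: B hsmul_hsmul mult.commute)
  also have "\<dots> = hsmul (\<Sum>w\<in>A. vp (int l - 2 * int (length w))) B"
    by (simp add: sum_hsmul hsmul_hsmul sum_distrib_left vp_mult)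
  also have "(\<Sum>w\<in>A. vp (int l - 2 * int (length w))) = (\<Sum>w\<in>A. vp (- int l + 2 * int (length w)))"
  proof (rule sum.reindex_bij_witness[where i=\<phi> and j=\<phi>])
    fix w assume w: "w \<in> A"
    show "\<phi> (\<phi> w) = w" "\<phi> w \<in> A" using \<phi> w by auto
    have "int (length (\<phi> w)) + int (length w) = int l" using \<phi>(3)[OF w] by (metis of_nat_add)
    thus "vp (- int l + 2 * int (length (\<phi> w))) = vp (int l - 2 * int (length w))"
      by (intro arg_cong[where f=vp]) linarith
  qed (use \<phi> in auto)
  finally show ?thesis
    by (simp add: sum_distrib_left vp_mult)
qed

lemma single_in_Wd: "[c] \<in> Wd m"
  unfolding Wd_iff using m2
  by (intro exI[of _ c] exI[of _ 1]) (cases m, auto simp: one_enat_def)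

lemma gmul_Nil: "gmul m c [] = [c]"
proof -
  have "enat 0 \<noteq> m" using m2 by (cases m) auto
  thus ?thesis using canon_single[OF m2] by (simp add: gmul_def)
qed

lemma gmul_single_self: "gmul m c [c] = []"
  by (simp add: gmul_def)

lemma WJ_empty: "WJ m {} = {[]}"
  using Nil_in_Wd by (auto simp: WJ_def)

lemma wJ_empty: "wJ m {} = []"
  unfolding wJ_def WJ_empty by auto

lemma bJ_empty: "bJ m {} = HT []"
proof -
  have "{x \<in> Wd m. bruhat_le m x []} = {[]}"
    using Nil_in_Wd by (auto simp: bruhat_le_def weval_def dest: list_emb_Nil2)
  thus ?thesis by (simp add: bJ_def wJ_empty KL_def)
qed

lemma brk_empty: "brk m {} = 1"
  by (simp add: brk_def wJ_empty WJ_empty)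

lemma WJ_single: "WJ m {c} = {[], [c]}"
proof
  show "WJ m {c} \<subseteq> {[], [c]}"
  proof
    fix w assume "w \<in> WJ m {c}"
    hence w: "w \<in> Wd m" "set w \<subseteq> {c}" by (auto simp: WJ_def)
    from w(1) obtain b n where w_alt: "w = alt b n" by (rule WdE)
    have "n < 2"
    proof (rule ccontr)
      assume "\<not> n < 2"
      then obtain k where "n = Suc (Suc k)" by (metis add_2_eq_Suc le_Suc_ex not_less)
      hence "b \<in> set w" "(\<not> b) \<in> set w" using w_alt by (simp_all add: alt_Suc)
      with w(2) show False by auto
    qed
    with w(2) w_alt show "w \<in> {[], [c]}" by (auto simp: less_2_cases_iff)
  qed
  show "{[], [c]} \<subseteq> WJ m {c}"
    using Nil_in_Wd single_in_Wd by (auto simp: WJ_def)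
qed

lemma wJ_single: "wJ m {c} = [c]"
  unfolding wJ_def WJ_single by (rule the_equality) auto

lemma bJ_single: "bJ m {c} = hsmul (vp 1) (\<Sum>w\<in>{[], [c]}. HT w)"
proof -
  have "{x \<in> Wd m. bruhat_le m x [c]} = {[], [c]}"
    using Nil_in_Wd single_in_Wd
    by (auto simp: bruhat_le_def weval_def subseq_singleton_right_iff gmul_Nil)
  thus ?thesis by (simp add: bJ_def wJ_single KL_def)
qed

lemma brk_single: "brk m {c} = vp (- 1) * (\<Sum>w\<in>{[], [c]}. vp (2 * int (length w)))"
  by (simp add: brk_def wJ_single WJ_single)

lemma hmul_bJ_single_self: "hmul m (bJ m {c}) (bJ m {c}) = hsmul (brk m {c}) (bJ m {c})"
proof -
  have "hmul m (bJ m {c}) (bJ m {c})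
      = hsmul (vp (- int 1) * (\<Sum>w\<in>{[], [c]}. vp (2 * int (length w)))) (bJ m {c})"
    by (rule hmul_sum_HT_self[where X = "{c}" and \<phi> = "\<lambda>w. if w = [] then [c] else []"])
       (auto simp: bJ_single Nil_in_Wd single_in_Wd gmul_Nil gmul_single_self)
  thus ?thesis by (simp add: brk_single)
qed

end

lemma weval_alt: "enat n \<le> m \<Longrightarrow> (enat n = m \<longrightarrow> b) \<Longrightarrow> weval m (alt b n) = alt b n"
proof (induction n arbitrary: b)
  case (Suc k)
  have "enat k \<le> m" "enat k \<noteq> m"
    using Suc.prems by (cases m; simp)+
  with Suc show ?case by (simp add: weval_def alt_Suc[of b k] gmul_alt_Suc)
qed (simp add: weval_def)

lemma WJ_UNIV: "WJ m UNIV = Wd m"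
  by (simp add: WJ_def)

lemma not_finitary_UNIV_infinity: "\<not> finitary \<infinity> UNIV"
proof
  assume "finitary \<infinity> UNIV"
  hence "finite (Wd \<infinity>)" by (simp add: finitary_def WJ_UNIV)
  moreover have "range (alt True) \<subseteq> Wd \<infinity>"
    by (auto simp: Wd_iff intro!: exI)
  ultimately have "finite (range (alt True))" by (rule finite_subset[rotated])
  moreover have "inj (alt True)" by (rule injI) (simp add: alt_eq_iff)
  ultimately show False using range_inj_infinite by blast
qed

context
  fixes M :: nat
  assumes M2: "2 \<le> M"
begin

lemma length_le_if_in_Wd: "w \<in> Wd (enat M) \<Longrightarrow> length w \<le> M"
  by (erule WdE) simp

lemma longest_in_Wd: "alt True M \<in> Wd (enat M)"
  unfolding Wd_iff by auto

lemma finite_Wd: "finite (Wd (enat M))"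
proof -
  have "Wd (enat M) \<subseteq> (\<lambda>(b, n). alt b n) ` (UNIV \<times> {..M})"
    by (auto elim!: WdE)
  thus ?thesis by (rule finite_subset) auto
qed

lemma wJ_UNIV: "wJ (enat M) UNIV = alt True M"
  unfolding wJ_def WJ_UNIV
proof (rule the_equality)
  show "alt True M \<in> Wd (enat M) \<and> (\<forall>x\<in>Wd (enat M). length x \<le> length (alt True M))"
    using longest_in_Wd length_le_if_in_Wd by simp
  fix w assume "w \<in> Wd (enat M) \<and> (\<forall>x\<in>Wd (enat M). length x \<le> length w)"
  hence "w \<in> Wd (enat M)" "length w = M"
    using longest_in_Wd length_le_if_in_Wd[of w] by force+
  thus "w = alt True M" by (auto elim: WdE)
qed

text \<open>Every reduced word is a prefix of \<open>sts\<dots>\<close> or of its tail \<open>ts\<dots>\<close>.\<close>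
lemma bruhat_le_longest: "x \<in> Wd (enat M) \<Longrightarrow> bruhat_le (enat M) x (alt True M)"
proof (erule WdE)
  fix b n assume x: "x = alt b n" and n: "enat n \<le> enat M" "enat n = enat M \<longrightarrow> b"
  have "subseq x (alt True M)"
  proof (cases b)
    case True
    hence "x = take n (alt True M)" using x n by (simp add: take_alt)
    thus ?thesis using prefix_imp_subseq[OF take_is_prefix] by simp
  next
    case False
    hence "n \<le> M - 1" using n by auto
    moreover have "alt True M = True # alt False (M - 1)"
      using M2 alt_Suc[of True "M - 1"] by (simp add: Suc_diff_le)
    ultimately show ?thesis
      using x False prefix_imp_subseq[OF take_is_prefix, of n "alt False (M - 1)"]
      by (auto simp: take_alt)
  qed
  moreover have "weval (enat M) x = x"
    using x n weval_alt by simp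
  ultimately show ?thesis
    unfolding bruhat_le_def by blast
qed

lemma bJ_UNIV: "bJ (enat M) UNIV = hsmul (vp (int M)) (\<Sum>w\<in>Wd (enat M). HT w)"
proof -
  have "{x \<in> Wd (enat M). bruhat_le (enat M) x (alt True M)} = Wd (enat M)"
    using bruhat_le_longest by auto
  thus ?thesis by (simp add: bJ_def wJ_UNIV KL_def)
qed

lemma brk_UNIV: "brk (enat M) UNIV = vp (- int M) * (\<Sum>w\<in>Wd (enat M). vp (2 * int (length w)))"
  by (simp add: brk_def wJ_UNIV WJ_UNIV)

definition complement :: "bool list \<Rightarrow> bool list" where
  "complement w =
    (if w = [] then alt True M else if w = alt True M then [] else alt (hd w) (M - length w))"

lemma complement_props:
  assumes "w \<in> Wd (enat M)"
  shows "complement w \<in> Wd (enat M)" "complement (complement w) = w"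
    "length (complement w) + length w = M"
proof -
  obtain b n where w: "w = alt b n" and n: "n \<le> M" "n = M \<longrightarrow> b"
    using assms by (rule WdE) auto
  consider "n = 0" | "n = M" | "0 < n" "n < M" using n by linarith
  hence "complement w \<in> Wd (enat M) \<and> complement (complement w) = w
      \<and> length (complement w) + length w = M"
  proof cases
    case 3
    have "complement w = alt b (M - n)"
      using 3 w by (simp add: complement_def alt_eq_iff hd_alt)
    moreover have "complement (alt b (M - n)) = alt b n"
      using 3 by (auto simp: complement_def alt_eq_iff hd_alt)
    moreover have "alt b (M - n) \<in> Wd (enat M)"
      unfolding Wd_iff using 3 by (intro exI[of _ b] exI[of _ "M - n"]) auto
    ultimately show ?thesis using w 3 by simp
  qed (use w n M2 longest_in_Wd Nil_in_Wd in \<open>auto simp: complement_def\<close>)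
  thus "complement w \<in> Wd (enat M)" "complement (complement w) = w"
    "length (complement w) + length w = M" by auto
qed

lemma hmul_bJ_UNIV_self:
  "hmul (enat M) (bJ (enat M) UNIV) (bJ (enat M) UNIV)
    = hsmul (brk (enat M) UNIV) (bJ (enat M) UNIV)"
proof -
  have m2: "2 \<le> enat M" using M2 by (simp add: numeral_eq_enat)
  show ?thesis
    unfolding brk_UNIV
    by (rule hmul_sum_HT_self[OF m2 finite_Wd, where X = UNIV and \<phi> = complement and l = M])
       (auto simp: bJ_UNIV complement_props gmul_in_Wd[OF m2])
qed

end

lemma bool_set_cases:
  obtains "X = {}" | c where "X = {c}" | "X = (UNIV :: bool set)"
proof -
  have mem: "x \<in> X \<longleftrightarrow> (x \<and> True \<in> X) \<or> (\<not> x \<and> False \<in> X)" for x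
    by (cases x) simp_all
  consider "True \<in> X" "False \<in> X" | "True \<in> X" "False \<notin> X" | "True \<notin> X" "False \<in> X"
    | "True \<notin> X" "False \<notin> X" by blast
  thus thesis
  proof cases
    case 1 thus thesis using that(3) mem by blast
  next
    case 2 thus thesis using that(2)[of True] mem by blast
  next
    case 3 thus thesis using that(2)[of False] mem by blast
  next
    case 4 thus thesis using that(1) mem by blast
  qed
qed

lemma hmul_bJ_self:
  assumes "2 \<le> m" "finitary m X"
  shows "hmul m (bJ m X) (bJ m X) = hsmul (brk m X) (bJ m X)"
proof (cases X rule: bool_set_cases)
  case 1
  thus ?thesis using assms by (simp add: bJ_empty brk_empty hmul_Nil_left)
next
  case 2
  thus ?thesis using assms by (simp add: hmul_bJ_single_self)
next
  case 3
  with assms obtain M where "m = enat M" "2 \<le> M"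
    using not_finitary_UNIV_infinity by (cases m) (auto simp: numeral_eq_enat)
  thus ?thesis using 3 hmul_bJ_UNIV_self by simp
qed

text \<open>The constant term of \<open>\<Sum>\<^sub>w v\<^sup>2\<^sup>\<ell>\<^sup>(\<^sup>w\<^sup>)\<close> counts the identity element only.\<close>
lemma brk_nonzero:
  assumes "finitary m X"
  shows "brk m X \<noteq> 0"
proof -
  have "[] \<in> WJ m X" by (simp add: WJ_def Nil_in_Wd)
  hence "Poly_Mapping.lookup (\<Sum>w\<in>WJ m X. vp (2 * int (length w))) 0 = 1"
    using assms by (simp add: finitary_def lookup_sum vp_def lookup_single when_def)
  hence "(\<Sum>w\<in>WJ m X. vp (2 * int (length w))) \<noteq> 0" by auto
  thus ?thesis by (simp add: brk_def vp_nonzero)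
qed

section \<open>Composition through the empty parabolic, and traces\<close>

lemma star_eqI: "finitary m J \<Longrightarrow> hmul m x y = hsmul (brk m J) z \<Longrightarrow> star m J x y = z"
  unfolding star_def
  by (rule the_equality) (simp_all add: hsmul_left_cancel brk_nonzero)

lemma Hset_bJ: "bJ m J \<in> Hset m"
  by (simp add: bJ_def Hset_KL)

lemma zero_in_hEnd: "0 \<in> hEnd m X"
proof -
  have "hmul m 0 (bJ m X) = 0" "hmul m (bJ m X) 0 = 0"
    by (simp add: hmul_eq_lin_ext lin_ext_def) (rule hlinear_zero[OF hlinear_hmul])
  thus ?thesis
    unfolding hEnd_def hHom_def using Hset_zero by (smt (verit) CollectI IntI)
qed

lemma is_trace_hsmul:
  assumes "is_trace m e" "finitary m X" "x \<in> hEnd m X"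
  shows "e X (hsmul c x) = c * e X x"
proof -
  have lin: "e X (hsmul c a + b) = c * e X a + e X b" if "a \<in> hEnd m X" "b \<in> hEnd m X" for a b c
    using assms(1,2) that unfolding is_trace_def by blast
  have "e X 0 = 0"
    using lin[OF zero_in_hEnd zero_in_hEnd, of 1] by simp
  thus ?thesis
    using lin[OF assms(3) zero_in_hEnd, of c] by simp
qed

context
  fixes m :: enat
  assumes m2: "2 \<le> m"
begin

lemma right_multiples_Nil: "{hmul m x (HT []) | x. x \<in> Hset m} = Hset m"
  by (simp add: setcompr_eq_image hmul_Nil_right[OF m2])

lemma left_multiples_Nil: "{hmul m (HT []) y | y. y \<in> Hset m} = Hset m"
  by (simp add: setcompr_eq_image hmul_Nil_left)

lemma hHom_empty_source: "hHom m {} K = {hmul m (bJ m K) y | y. y \<in> Hset m}"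
  unfolding hHom_def bJ_empty[OF m2] right_multiples_Nil
  by (rule Int_absorb1) (auto simp: Hset_hmul[OF m2])

lemma hHom_empty_target: "hHom m J {} = {hmul m x (bJ m J) | x. x \<in> Hset m}"
  unfolding hHom_def bJ_empty[OF m2] left_multiples_Nil
  by (rule Int_absorb2) (auto simp: Hset_hmul[OF m2] Hset_bJ)

lemma hEnd_empty: "hEnd m {} = Hset m"
  unfolding hEnd_def hHom_empty_source bJ_empty[OF m2] left_multiples_Nil ..

lemma hEnd_subset_hHom_empty_source: "hEnd m X \<subseteq> hHom m {} X"
  unfolding hEnd_def by (subst hHom_empty_source) (auto simp: hHom_def)

lemma hEnd_subset_Hset: "hEnd m X \<subseteq> Hset m"
  unfolding hEnd_def hHom_def by (auto simp: Hset_hmul[OF m2])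

lemma bJ_in_hHom_empty_target: "bJ m X \<in> hHom m X {}"
proof -
  have "bJ m X = hmul m (HT []) (bJ m X)"
    by (simp add: hmul_Nil_left)
  thus ?thesis
    unfolding hHom_empty_target using Hset_HT[OF Nil_in_Wd] by blast
qed

lemma hEnd_hmul_bJ:
  assumes "finitary m X" "x \<in> hEnd m X"
  shows "hmul m x (bJ m X) = hsmul (brk m X) x" "hmul m (bJ m X) x = hsmul (brk m X) x"
proof -
  from assms(2) obtain y y' where y: "y \<in> Hset m" "x = hmul m y (bJ m X)"
    and y': "y' \<in> Hset m" "x = hmul m (bJ m X) y'"
    unfolding hEnd_def hHom_def by blast
  show "hmul m x (bJ m X) = hsmul (brk m X) x"
    using hmul_assoc[OF m2 y(1) Hset_bJ Hset_bJ, of X X] y(2) hmul_bJ_self[OF m2 assms(1)]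
    by (simp add: hmul_hsmul_right)
  show "hmul m (bJ m X) x = hsmul (brk m X) x"
    using hmul_assoc[OF m2 Hset_bJ Hset_bJ y'(1), of X X, symmetric] y'(2) hmul_bJ_self[OF m2 assms(1)]
    by (simp add: hmul_hsmul_left)
qed

lemma is_trace_brk_mult:
  assumes "is_trace m e" "finitary m X" "x \<in> hEnd m X"
  shows "brk m X * e X x = e {} x"
proof -
  have fin0: "finitary m {}"
    by (simp add: finitary_def WJ_empty[OF m2])
  have "x \<in> hHom m {} X" "bJ m X \<in> hHom m X {}"
    using assms(3) hEnd_subset_hHom_empty_source bJ_in_hHom_empty_target by auto
  with assms(1,2) fin0 have "e X (star m {} x (bJ m X)) = e {} (star m X (bJ m X) x)"
    unfolding is_trace_def by blast
  moreover have "star m {} x (bJ m X) = hsmul (brk m X) x"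
    using fin0 hEnd_hmul_bJ[OF assms(2,3)] by (intro star_eqI) (simp_all add: brk_empty[OF m2])
  moreover have "star m X (bJ m X) x = x"
    using hEnd_hmul_bJ[OF assms(2,3)] assms(2) by (intro star_eqI) simp_all
  ultimately show ?thesis
    using is_trace_hsmul[OF assms] by simp
qed

end

theorem claim2p21:
  fixes m :: enat and eps eps' :: "bool set \<Rightarrow> hecke \<Rightarrow> laurent"
  assumes "m \<ge> 2"
    and "is_trace m eps" and "is_trace m eps'"
    and "\<forall>x\<in>hEnd m {}. eps {} x = eps' {} x"
  shows "\<forall>X. finitary m X \<longrightarrow> (\<forall>x\<in>hEnd m X. eps X x = eps' X x)"
proof (intro allI impI ballI)
  fix X x assume X: "finitary m X" and x: "x \<in> hEnd m X"
  have "x \<in> hEnd m {}"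
    using x hEnd_subset_Hset[OF assms(1)] hEnd_empty[OF assms(1)] by auto
  hence "brk m X * eps X x = brk m X * eps' X x"
    using is_trace_brk_mult[OF assms(1) _ X x] assms(2-4) by simp
  thus "eps X x = eps' X x"
    using brk_nonzero[OF X] by simp
qed

end
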